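(* Under the setting below (in which $\mathbb{P}(X_{0:t}(a_{1:t})\in B_{0:t})>0$ and $\mathbb{P}(\underline y\le Y(a_{1:t})\le\overline y\mid X_{0:t}(a_{1:t})\in B_{0:t})=1$), there exist potential outcomes $(\tilde X_{0:T}(a'_{1:T}),\tilde Y(a'_{1:t}):a'_{1:T}\in\mathcal{A}_{1:T})$, also satisfying $\mathbb{P}(\underline y\le\tilde Y(a_{1:t})\le\overline y\mid\tilde X_{0:t}(a_{1:t})\in B_{0:t})=1$, with $$(\tilde X_{0:T}(A_{1:T}),\tilde Y(A_{1:t}),A_{1:T})=(X_{0:T}(A_{1:T}),Y(A_{1:t}),A_{1:T})\quad\text{almost surely},$$ but for which $\mathbb{E}[\tilde Y(a_{1:t})\mid\tilde X_{0:t}(a_{1:t})\in B_{0:t}]=\mathbb{E}[\underline Y\mid X_{0:N}(A_{1:N})\in B_{0:N}]$. The corresponding statement with $\overline Y$ in place of $\underline Y$ also holds.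
   Context: Horizon $T\ge1$, $\mathcal{X}_t=\mathbb{R}^{d_t}$, finite action spaces $\mathcal{A}_t$; potential outcomes $X_0$, $X_t(a_{1:t})\in\mathcal{X}_t$, random actions $A_{1:T}$, real-valued potential outcomes $Y(a_{1:t})$ defined jointly; $X_{0:t}(a_{1:t})=(X_0,X_1(a_1),\dots,X_t(a_{1:t}))$. Fixed $t\in\{1,\dots,T\}$, $a_{1:t}\in\mathcal{A}_{1:t}$, measurable $B_{0:t}=B_0\times\cdots\times B_t$, $\underline y,\overline y\in\mathbb{R}$. $N=\max\{0\le s\le t:A_{1:s}=a_{1:s}\}$; $\underline Y=\mathbb{1}(A_{1:t}=a_{1:t})Y(A_{1:t})+\mathbb{1}(A_{1:t}\ne a_{1:t})\underline y$, $\overline Y$ likewise with $\overline y$. Quantities evaluated at random actions denote the potential outcome indexed by the realized actions. *)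

theory Defs
  imports "HOL-Probability.Probability"
begin

definition obs_space :: "(nat \<Rightarrow> nat) \<Rightarrow> nat \<Rightarrow> (nat \<Rightarrow> real) measure" where
  "obs_space d s = PiM {..< d s} (\<lambda>_. borel)"

text \<open>Action sequences a_{1:s} are lists of length s; entry i (0-based) lies in Act (i+1).\<close>
definition valid_acts :: "(nat \<Rightarrow> 'a set) \<Rightarrow> nat \<Rightarrow> 'a list \<Rightarrow> bool" where
  "valid_acts Act s l \<longleftrightarrow> length l = s \<and> (\<forall>i<s. l ! i \<in> Act (Suc i))"

definition acts_prefix :: "(nat \<Rightarrow> 'w \<Rightarrow> 'a) \<Rightarrow> nat \<Rightarrow> 'w \<Rightarrow> 'a list" where
  "acts_prefix A s \<omega> = map (\<lambda>i. A i \<omega>) [1..<Suc s]"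

definition last_agree :: "(nat \<Rightarrow> 'w \<Rightarrow> 'a) \<Rightarrow> 'a list \<Rightarrow> nat \<Rightarrow> 'w \<Rightarrow> nat" where
  "last_agree A a t \<omega> = Max {s. s \<le> t \<and> acts_prefix A s \<omega> = take s a}"

text \<open>Potential outcomes: X s l is X_s(a_{1:s}) for valid l of length s (X 0 [] = X_0),
  Y l is Y(a_{1:t}) for valid l of length t; all are random variables.\<close>
definition potential_outcomes ::
  "'w measure \<Rightarrow> nat \<Rightarrow> nat \<Rightarrow> (nat \<Rightarrow> nat) \<Rightarrow> (nat \<Rightarrow> 'a set)
    \<Rightarrow> (nat \<Rightarrow> 'a list \<Rightarrow> 'w \<Rightarrow> (nat \<Rightarrow> real)) \<Rightarrow> ('a list \<Rightarrow> 'w \<Rightarrow> real) \<Rightarrow> bool" where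
  "potential_outcomes M T t d Act X Y \<longleftrightarrow>
     (\<forall>s\<le>T. \<forall>l. valid_acts Act s l \<longrightarrow> X s l \<in> M \<rightarrow>\<^sub>M obs_space d s) \<and>
     (\<forall>l. valid_acts Act t l \<longrightarrow> Y l \<in> borel_measurable M)"

definition fixed_event ::
  "'w measure \<Rightarrow> (nat \<Rightarrow> 'a list \<Rightarrow> 'w \<Rightarrow> (nat \<Rightarrow> real)) \<Rightarrow> 'a list \<Rightarrow> nat
     \<Rightarrow> (nat \<Rightarrow> (nat \<Rightarrow> real) set) \<Rightarrow> 'w set" where
  "fixed_event M X a t B = {\<omega> \<in> space M. \<forall>s\<le>t. X s (take s a) \<omega> \<in> B s}"

definition realised_event ::
  "'w measure \<Rightarrow> (nat \<Rightarrow> 'a list \<Rightarrow> 'w \<Rightarrow> (nat \<Rightarrow> real)) \<Rightarrow> (nat \<Rightarrow> 'w \<Rightarrow> 'a)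
     \<Rightarrow> (nat \<Rightarrow> (nat \<Rightarrow> real) set) \<Rightarrow> ('w \<Rightarrow> nat) \<Rightarrow> 'w set" where
  "realised_event M X A B N = {\<omega> \<in> space M. \<forall>s\<le>N \<omega>. X s (acts_prefix A s \<omega>) \<omega> \<in> B s}"

definition cond_prob_ev :: "'w measure \<Rightarrow> 'w set \<Rightarrow> 'w set \<Rightarrow> real" where
  "cond_prob_ev M F E = measure M (F \<inter> E) / measure M E"

definition cond_exp_ev :: "'w measure \<Rightarrow> ('w \<Rightarrow> real) \<Rightarrow> 'w set \<Rightarrow> real" where
  "cond_exp_ev M f E = (\<integral>\<omega>. indicator E \<omega> * f \<omega> \<partial>M) / measure M E"

text \<open>Y-underbar (resp. Y-overbar) with default value y.\<close>
definition clipped_outcome ::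
  "(nat \<Rightarrow> 'w \<Rightarrow> 'a) \<Rightarrow> ('a list \<Rightarrow> 'w \<Rightarrow> real) \<Rightarrow> 'a list \<Rightarrow> nat \<Rightarrow> real \<Rightarrow> 'w \<Rightarrow> real" where
  "clipped_outcome A Y a t y \<omega> =
     (if acts_prefix A t \<omega> = a then Y (acts_prefix A t \<omega>) \<omega> else y)"

end

theory Submission
  imports Defs
begin

text \<open>Only the potential outcomes along the realised actions are observed. On the event that
  the realised actions leave a_{1:s}, replace X_s(a_{1:s}) by a fixed element of B_s, and on the
  event that they leave a_{1:t}, replace Y(a_{1:t}) by the bound y. The observed data do not change,
  the event {X_{0:t}(a_{1:t}) in B_{0:t}} turns into {X_{0:N}(A_{1:N}) in B_{0:N}} and Y(a_{1:t})
  into the clipped outcome with default y, while the new outcome can leave [ylo, yhi] on the new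
  event only where the old one already left it on the old event.\<close>

lemma length_acts_prefix [simp]: "length (acts_prefix A s \<omega>) = s"
  unfolding acts_prefix_def by simp

lemma nth_acts_prefix [simp]: "i < s \<Longrightarrow> acts_prefix A s \<omega> ! i = A (Suc i) \<omega>"
  unfolding acts_prefix_def by (simp del: upt_Suc)

lemma acts_prefix_0 [simp]: "acts_prefix A 0 \<omega> = []"
  unfolding acts_prefix_def by simp

lemma take_acts_prefix [simp]: "r \<le> s \<Longrightarrow> take r (acts_prefix A s \<omega>) = acts_prefix A r \<omega>"
  by (simp add: list_eq_iff_nth_eq)

lemma pred_acts_prefix_eq:
  assumes "\<And>i. 1 \<le> i \<Longrightarrow> i \<le> s \<Longrightarrow> A i \<in> M \<rightarrow>\<^sub>M count_space UNIV"
  shows "Measurable.pred M (\<lambda>\<omega>. acts_prefix A s \<omega> = l)"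
proof -
  have "(\<lambda>\<omega>. acts_prefix A s \<omega> = l) = (\<lambda>\<omega>. length l = s \<and> (\<forall>i\<in>{..<s}. A (Suc i) \<omega> = l ! i))"
    by (auto simp: list_eq_iff_nth_eq)
  moreover have "Measurable.pred M (\<lambda>\<omega>. \<forall>i\<in>{..<s}. A (Suc i) \<omega> = l ! i)"
    by (rule pred_intros_finite) (use assms in \<open>auto intro: pred_count_space_const1\<close>)
  ultimately show ?thesis
    by simp
qed

lemma last_agree_le: "last_agree A a t \<omega> \<le> t"
  and acts_prefix_last_agree: "acts_prefix A (last_agree A a t \<omega>) \<omega> = take (last_agree A a t \<omega>) a"
proof -
  have "last_agree A a t \<omega> \<in> {s. s \<le> t \<and> acts_prefix A s \<omega> = take s a}"
    unfolding last_agree_def by (rule Max_in) (auto intro: exI[of _ 0])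
  then show "last_agree A a t \<omega> \<le> t" "acts_prefix A (last_agree A a t \<omega>) \<omega> = take (last_agree A a t \<omega>) a"
    by auto
qed

lemma le_last_agree_iff:
  assumes "s \<le> t"
  shows "s \<le> last_agree A a t \<omega> \<longleftrightarrow> acts_prefix A s \<omega> = take s a"
proof
  assume "s \<le> last_agree A a t \<omega>"
  then have "acts_prefix A s \<omega> = take s (acts_prefix A (last_agree A a t \<omega>) \<omega>)"
    by simp
  with \<open>s \<le> last_agree A a t \<omega>\<close> show "acts_prefix A s \<omega> = take s a"
    by (simp add: acts_prefix_last_agree min_absorb1)
next
  assume "acts_prefix A s \<omega> = take s a"
  with assms show "s \<le> last_agree A a t \<omega>"
    unfolding last_agree_def by (intro Max_ge) auto
qed

lemma fixed_event_in_sets: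
  assumes "\<And>s. s \<le> t \<Longrightarrow> X s (take s a) \<in> M \<rightarrow>\<^sub>M obs_space d s"
    and "\<And>s. s \<le> t \<Longrightarrow> B s \<in> sets (obs_space d s)"
  shows "fixed_event M X a t B \<in> sets M"
proof -
  have "Measurable.pred M (\<lambda>\<omega>. \<forall>s\<in>{..t}. X s (take s a) \<omega> \<in> B s)"
    by (rule pred_intros_finite) (auto intro: pred_sets2[OF assms(2) assms(1)])
  then show ?thesis
    by (simp only: fixed_event_def pred_def Ball_def atMost_iff)
qed

lemma (in finite_measure) cond_prob_ev_eq_1_iff:
  assumes "E \<in> sets M" "F \<in> sets M"
  shows "cond_prob_ev M F E = 1 \<longleftrightarrow> measure M E \<noteq> 0 \<and> measure M (E - F) = 0"
  using assms by (auto simp: cond_prob_ev_def finite_measure_Diff' Int_commute)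

lemma (in finite_measure) cond_prob_ev_eq_1_transfer:
  assumes "cond_prob_ev M F E = 1" "E \<subseteq> E'" "E' - F' \<subseteq> E - F"
    and "E \<in> sets M" "F \<in> sets M" "E' \<in> sets M" "F' \<in> sets M"
  shows "cond_prob_ev M F' E' = 1"
proof -
  have "measure M E \<noteq> 0" "measure M (E - F) = 0"
    using assms by (simp_all add: cond_prob_ev_eq_1_iff)
  moreover have "measure M E \<le> measure M E'" "measure M (E' - F') \<le> measure M (E - F)"
    using assms by (auto intro!: finite_measure_mono)
  ultimately have "measure M E' \<noteq> 0" "measure M (E' - F') = 0"
    using measure_nonneg[of M E] measure_nonneg[of M "E' - F'"] by linarith+
  then show ?thesis
    using assms by (simp add: cond_prob_ev_eq_1_iff)
qed

definition replace_unobserved_X ::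
  "(nat \<Rightarrow> 'w \<Rightarrow> 'a) \<Rightarrow> 'a list \<Rightarrow> nat \<Rightarrow> (nat \<Rightarrow> 'x)
     \<Rightarrow> (nat \<Rightarrow> 'a list \<Rightarrow> 'w \<Rightarrow> 'x) \<Rightarrow> nat \<Rightarrow> 'a list \<Rightarrow> 'w \<Rightarrow> 'x" where
  "replace_unobserved_X A a t b X s l \<omega> =
     (if s \<le> t \<and> l = take s a \<and> acts_prefix A s \<omega> \<noteq> take s a then b s else X s l \<omega>)"

definition replace_unobserved_Y ::
  "(nat \<Rightarrow> 'w \<Rightarrow> 'a) \<Rightarrow> 'a list \<Rightarrow> nat \<Rightarrow> 'y \<Rightarrow> ('a list \<Rightarrow> 'w \<Rightarrow> 'y) \<Rightarrow> 'a list \<Rightarrow> 'w \<Rightarrow> 'y" where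
  "replace_unobserved_Y A a t y Y l \<omega> = (if l = a \<and> acts_prefix A t \<omega> \<noteq> a then y else Y l \<omega>)"

lemma replace_unobserved_X_observed [simp]:
  "replace_unobserved_X A a t b X s (acts_prefix A s \<omega>) \<omega> = X s (acts_prefix A s \<omega>) \<omega>"
  by (simp add: replace_unobserved_X_def)

lemma replace_unobserved_Y_observed [simp]:
  "replace_unobserved_Y A a t y Y (acts_prefix A t \<omega>) \<omega> = Y (acts_prefix A t \<omega>) \<omega>"
  by (simp add: replace_unobserved_Y_def)

lemma replace_unobserved_Y_eq_clipped_outcome:
  "replace_unobserved_Y A a t y Y a = clipped_outcome A Y a t y"
  by (auto simp: replace_unobserved_Y_def clipped_outcome_def)

lemma potential_outcomes_replace_unobserved:
  assumes "potential_outcomes M T t d Act X Y" "t \<le> T"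
    and "\<And>s. 1 \<le> s \<Longrightarrow> s \<le> T \<Longrightarrow> A s \<in> M \<rightarrow>\<^sub>M count_space UNIV"
    and "\<And>s. s \<le> t \<Longrightarrow> b s \<in> space (obs_space d s)"
  shows "potential_outcomes M T t d Act (replace_unobserved_X A a t b X) (replace_unobserved_Y A a t y Y)"
proof -
  have deviates: "{\<omega> \<in> space M. acts_prefix A s \<omega> \<noteq> l} \<in> sets M" if "s \<le> T" for s l
    using that assms(3) by (intro sets.sets_Collect_neg pred_acts_prefix_eq[unfolded pred_def]) auto
  have "replace_unobserved_X A a t b X s l \<in> M \<rightarrow>\<^sub>M obs_space d s"
    if "s \<le> T" "valid_acts Act s l" for s l
  proof -
    have X: "X s l \<in> M \<rightarrow>\<^sub>M obs_space d s"
      using assms(1) that by (simp add: potential_outcomes_def)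
    show ?thesis
    proof (cases "s \<le> t \<and> l = take s a")
      case True
      then show ?thesis
        unfolding replace_unobserved_X_def using X assms(4) deviates[OF that(1)]
        by (auto intro!: measurable_If)
    next
      case False
      then have "replace_unobserved_X A a t b X s l = X s l"
        by (auto simp: replace_unobserved_X_def)
      with X show ?thesis
        by simp
    qed
  qed
  moreover have "replace_unobserved_Y A a t y Y l \<in> borel_measurable M"
    if "valid_acts Act t l" for l
  proof -
    have "Y l \<in> borel_measurable M"
      using assms(1) that by (simp add: potential_outcomes_def)
    then show ?thesis
      unfolding replace_unobserved_Y_def
      using deviates[OF assms(2)] by (cases "l = a") (auto intro!: measurable_If)
  qed
  ultimately show ?thesis
    by (simp add: potential_outcomes_def)
qed

lemma fixed_event_replace_unobserved_X:
  assumes "\<And>s. s \<le> t \<Longrightarrow> b s \<in> B s"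
  shows "fixed_event M (replace_unobserved_X A a t b X) a t B = realised_event M X A B (last_agree A a t)"
proof -
  have pointwise: "replace_unobserved_X A a t b X s (take s a) \<omega> \<in> B s \<longleftrightarrow>
      (s \<le> last_agree A a t \<omega> \<longrightarrow> X s (acts_prefix A s \<omega>) \<omega> \<in> B s)" if "s \<le> t" for s \<omega>
    using that assms le_last_agree_iff[OF that, of A a \<omega>] by (auto simp: replace_unobserved_X_def)
  have "(\<forall>s\<le>t. replace_unobserved_X A a t b X s (take s a) \<omega> \<in> B s) \<longleftrightarrow>
      (\<forall>s\<le>last_agree A a t \<omega>. X s (acts_prefix A s \<omega>) \<omega> \<in> B s)" for \<omega>
    using pointwise last_agree_le[of A a t \<omega>] by (meson order.trans)
  then show ?thesis
    unfolding fixed_event_def realised_event_def by blast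
qed

lemma fixed_event_subset_replace_unobserved_X:
  assumes "\<And>s. s \<le> t \<Longrightarrow> b s \<in> B s"
  shows "fixed_event M X a t B \<subseteq> fixed_event M (replace_unobserved_X A a t b X) a t B"
  using assms by (auto simp: fixed_event_def replace_unobserved_X_def)

lemma fixed_event_replace_unobserved_diff_subset:
  assumes "ylo \<le> y" "y \<le> yhi"
  shows "fixed_event M (replace_unobserved_X A a t b X) a t B
           - {\<omega> \<in> space M. ylo \<le> replace_unobserved_Y A a t y Y a \<omega> \<and> replace_unobserved_Y A a t y Y a \<omega> \<le> yhi}
         \<subseteq> fixed_event M X a t B - {\<omega> \<in> space M. ylo \<le> Y a \<omega> \<and> Y a \<omega> \<le> yhi}"
proof
  fix \<omega>
  assume violated: "\<omega> \<in> fixed_event M (replace_unobserved_X A a t b X) a t B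
      - {\<omega> \<in> space M. ylo \<le> replace_unobserved_Y A a t y Y a \<omega> \<and> replace_unobserved_Y A a t y Y a \<omega> \<le> yhi}"
  then have "acts_prefix A t \<omega> = a"
    using assms by (auto simp: fixed_event_def replace_unobserved_Y_def split: if_splits)
  then have "acts_prefix A s \<omega> = take s a" if "s \<le> t" for s
    using that by (metis take_acts_prefix)
  with violated \<open>acts_prefix A t \<omega> = a\<close>
  show "\<omega> \<in> fixed_event M X a t B - {\<omega> \<in> space M. ylo \<le> Y a \<omega> \<and> Y a \<omega> \<le> yhi}"
    by (auto simp: fixed_event_def replace_unobserved_X_def replace_unobserved_Y_def)
qed

lemma exists_potential_outcomes_with_clipped_mean:
  assumes "finite_measure M" "t \<le> T"
    and A_meas: "\<And>s. 1 \<le> s \<Longrightarrow> s \<le> T \<Longrightarrow> A s \<in> M \<rightarrow>\<^sub>M count_space UNIV"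
    and PO: "potential_outcomes M T t d Act X Y"
    and a: "valid_acts Act t a"
    and B: "\<And>s. s \<le> t \<Longrightarrow> B s \<in> sets (obs_space d s)"
    and bounded: "cond_prob_ev M {\<omega> \<in> space M. ylo \<le> Y a \<omega> \<and> Y a \<omega> \<le> yhi} (fixed_event M X a t B) = 1"
    and y: "ylo \<le> y" "y \<le> yhi"
  shows "\<exists>X' Y'. potential_outcomes M T t d Act X' Y' \<and>
      cond_prob_ev M {\<omega> \<in> space M. ylo \<le> Y' a \<omega> \<and> Y' a \<omega> \<le> yhi} (fixed_event M X' a t B) = 1 \<and>
      (AE \<omega> in M. (\<forall>s\<le>T. X' s (acts_prefix A s \<omega>) \<omega> = X s (acts_prefix A s \<omega>) \<omega>) \<and>
                   Y' (acts_prefix A t \<omega>) \<omega> = Y (acts_prefix A t \<omega>) \<omega>) \<and>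
      cond_exp_ev M (Y' a) (fixed_event M X' a t B) =
        cond_exp_ev M (clipped_outcome A Y a t y) (realised_event M X A B (last_agree A a t))"
proof -
  interpret finite_measure M by fact
  have valid_take: "valid_acts Act s (take s a)" if "s \<le> t" for s
    using a that by (auto simp: valid_acts_def)
  have "fixed_event M X a t B \<noteq> {}"
    using bounded by (auto simp: cond_prob_ev_def)
  then obtain \<omega>\<^sub>0 where \<omega>\<^sub>0: "\<omega>\<^sub>0 \<in> fixed_event M X a t B"
    by blast
  define b where "b s = X s (take s a) \<omega>\<^sub>0" for s
  have b_B: "b s \<in> B s" if "s \<le> t" for s
    using \<omega>\<^sub>0 that by (simp add: fixed_event_def b_def)
  have b_space: "b s \<in> space (obs_space d s)" if "s \<le> t" for s
    using b_B[OF that] sets.sets_into_space[OF B[OF that]] by blast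
  define X' where "X' = replace_unobserved_X A a t b X"
  define Y' where "Y' = replace_unobserved_Y A a t y Y"
  have PO': "potential_outcomes M T t d Act X' Y'"
    unfolding X'_def Y'_def using PO \<open>t \<le> T\<close> A_meas b_space by (rule potential_outcomes_replace_unobserved)
  have events: "fixed_event M Z a t B \<in> sets M" "{\<omega> \<in> space M. ylo \<le> W a \<omega> \<and> W a \<omega> \<le> yhi} \<in> sets M"
    if "potential_outcomes M T t d Act Z W" for Z W
    using that a \<open>t \<le> T\<close> valid_take B
    by (auto simp: potential_outcomes_def intro!: fixed_event_in_sets)
  have "cond_prob_ev M {\<omega> \<in> space M. ylo \<le> Y' a \<omega> \<and> Y' a \<omega> \<le> yhi} (fixed_event M X' a t B) = 1"
    using bounded fixed_event_subset_replace_unobserved_X[OF b_B]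
      fixed_event_replace_unobserved_diff_subset[OF y] events[OF PO] events[OF PO']
    unfolding X'_def Y'_def by (rule cond_prob_ev_eq_1_transfer)
  moreover have "AE \<omega> in M. (\<forall>s\<le>T. X' s (acts_prefix A s \<omega>) \<omega> = X s (acts_prefix A s \<omega>) \<omega>) \<and>
                   Y' (acts_prefix A t \<omega>) \<omega> = Y (acts_prefix A t \<omega>) \<omega>"
    by (simp add: X'_def Y'_def)
  moreover have "cond_exp_ev M (Y' a) (fixed_event M X' a t B) =
      cond_exp_ev M (clipped_outcome A Y a t y) (realised_event M X A B (last_agree A a t))"
    by (simp add: X'_def Y'_def fixed_event_replace_unobserved_X[OF b_B] replace_unobserved_Y_eq_clipped_outcome)
  ultimately show ?thesis
    using PO' by blast
qed

theorem proposition4p6: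
  fixes M :: "'w measure" and T t :: nat and d :: "nat \<Rightarrow> nat"
    and Act :: "nat \<Rightarrow> 'a set"
    and A :: "nat \<Rightarrow> 'w \<Rightarrow> 'a"
    and X :: "nat \<Rightarrow> 'a list \<Rightarrow> 'w \<Rightarrow> (nat \<Rightarrow> real)"
    and Y :: "'a list \<Rightarrow> 'w \<Rightarrow> real"
    and a :: "'a list" and B :: "nat \<Rightarrow> (nat \<Rightarrow> real) set"
    and ylo yhi :: real
  assumes "prob_space M"
    and "1 \<le> T" and "1 \<le> t" and "t \<le> T"
    and "\<And>s. 1 \<le> s \<Longrightarrow> s \<le> T \<Longrightarrow> finite (Act s)"
    and "\<And>s. 1 \<le> s \<Longrightarrow> s \<le> T \<Longrightarrow> A s \<in> M \<rightarrow>\<^sub>M count_space UNIV"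
    and "\<And>s \<omega>. 1 \<le> s \<Longrightarrow> s \<le> T \<Longrightarrow> \<omega> \<in> space M \<Longrightarrow> A s \<omega> \<in> Act s"
    and "potential_outcomes M T t d Act X Y"
    and "valid_acts Act t a"
    and "\<And>s. s \<le> t \<Longrightarrow> B s \<in> sets (obs_space d s)"
    and "measure M (fixed_event M X a t B) > 0"
    and "cond_prob_ev M {\<omega> \<in> space M. ylo \<le> Y a \<omega> \<and> Y a \<omega> \<le> yhi} (fixed_event M X a t B) = 1"
  shows
   "(\<exists>X' Y'. potential_outcomes M T t d Act X' Y' \<and>
      cond_prob_ev M {\<omega> \<in> space M. ylo \<le> Y' a \<omega> \<and> Y' a \<omega> \<le> yhi} (fixed_event M X' a t B) = 1 \<and>
      (AE \<omega> in M. (\<forall>s\<le>T. X' s (acts_prefix A s \<omega>) \<omega> = X s (acts_prefix A s \<omega>) \<omega>) \<and>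
                   Y' (acts_prefix A t \<omega>) \<omega> = Y (acts_prefix A t \<omega>) \<omega>) \<and>
      cond_exp_ev M (Y' a) (fixed_event M X' a t B) =
        cond_exp_ev M (clipped_outcome A Y a t ylo) (realised_event M X A B (last_agree A a t)))
  \<and> (\<exists>X' Y'. potential_outcomes M T t d Act X' Y' \<and>
      cond_prob_ev M {\<omega> \<in> space M. ylo \<le> Y' a \<omega> \<and> Y' a \<omega> \<le> yhi} (fixed_event M X' a t B) = 1 \<and>
      (AE \<omega> in M. (\<forall>s\<le>T. X' s (acts_prefix A s \<omega>) \<omega> = X s (acts_prefix A s \<omega>) \<omega>) \<and>
                   Y' (acts_prefix A t \<omega>) \<omega> = Y (acts_prefix A t \<omega>) \<omega>) \<and>
      cond_exp_ev M (Y' a) (fixed_event M X' a t B) =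
        cond_exp_ev M (clipped_outcome A Y a t yhi) (realised_event M X A B (last_agree A a t)))"
proof -
  have "{\<omega> \<in> space M. ylo \<le> Y a \<omega> \<and> Y a \<omega> \<le> yhi} \<inter> fixed_event M X a t B \<noteq> {}"
    using assms(12) by (auto simp: cond_prob_ev_def)
  then have "ylo \<le> yhi"
    by auto
  have M: "finite_measure M"
    using assms(1) by (rule prob_space.finite_measure)
  show ?thesis
    using exists_potential_outcomes_with_clipped_mean[where A = A, OF M assms(4,6,8-10,12)] \<open>ylo \<le> yhi\<close>
    by blast
qed

end
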